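(* Let $\delta=S/(2\pi\mu)\in(0,1)$, and let $\tau_0=\tau_1/k$, where $\tau_1>k$ is the positive root of $\lambda_1(\tau)=k$. For $a\in(0,b)$ and $\nu=0$, the equation $\mathcal R(a)=0$, with $\mathcal R(a)=kS\,g(-a;\tau_1,k)+2\pi\mu\,g'(-a;\tau_1,k)$, is equivalent to $$\tanh(ak\tau_0)=\frac{\tau_0(1+\delta)}{\tau_0^2+\delta}.$$ Moreover: (i) if $k,b,\delta$ are fixed and $\alpha=1-\beta$ is sufficiently small, this equation has a solution $a^*\in(0,b)$, and $a^*\sim \alpha^2(1+\delta)/(4k)$ as $\alpha\to0$; (ii) if $k,b,\delta$ are fixed and $\beta$ is sufficiently small, this equation has no solution $a\in(0,b)$.
   Context: Fix $k>0$, $b>0$, $\beta\in(0,1)$, $\alpha=1-\beta$. $\lambda_1(\tau)=\dfrac{\alpha\tau\tanh b\tau}{1+\beta\tanh b\tau}$; the equation $\lambda_1(\tau)=k$ has a unique positive root $\tau_1$, and $\tau_1>k$. $g(y;\tau,\lambda)=\tau\cosh\tau y+\lambda\sinh\tau y$, $g'=\partial g/\partial y$. $S>0$ is the area enclosed by a simple closed smooth curve $C$ and $\mu>0$ is its vertical dipole strength: with $n=(n_1,n_2)$ the unit normal to $C$ pointing into its interior, $\Psi$ the solution of $\Delta\Psi=0$ outside $C$, $\partial\Psi/\partial n=n_2$ on $C$, $\nabla\Psi\to 0$ at infinity, $\mu=\frac1{2\pi}(S+\int_C n_2\Psi\,dl)$; one has $S<2\pi\mu$. *)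

theory Defs
  imports "HOL-Analysis.Analysis" "HOL-Library.Landau_Symbols"
begin

definition lambda1 :: "real \<Rightarrow> real \<Rightarrow> real \<Rightarrow> real" where
  "lambda1 \<beta> b \<tau> = (1 - \<beta>) * \<tau> * tanh (b * \<tau>) / (1 + \<beta> * tanh (b * \<tau>))"

definition tau1 :: "real \<Rightarrow> real \<Rightarrow> real \<Rightarrow> real" where
  "tau1 k b \<beta> = (THE \<tau>. \<tau> > 0 \<and> lambda1 \<beta> b \<tau> = k)"

definition tau0 :: "real \<Rightarrow> real \<Rightarrow> real \<Rightarrow> real" where
  "tau0 k b \<beta> = tau1 k b \<beta> / k"

definition g :: "real \<Rightarrow> real \<Rightarrow> real \<Rightarrow> real" where
  "g \<tau> lam y = \<tau> * cosh (\<tau> * y) + lam * sinh (\<tau> * y)"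

definition g' :: "real \<Rightarrow> real \<Rightarrow> real \<Rightarrow> real" where
  "g' \<tau> lam y = deriv (\<lambda>z. g \<tau> lam z) y"

definition Rfun :: "real \<Rightarrow> real \<Rightarrow> real \<Rightarrow> real \<Rightarrow> real \<Rightarrow> real \<Rightarrow> real" where
  "Rfun k b \<beta> S \<mu> a =
     k * S * g (tau1 k b \<beta>) k (- a) + 2 * pi * \<mu> * g' (tau1 k b \<beta>) k (- a)"

definition tanh_eqn :: "real \<Rightarrow> real \<Rightarrow> real \<Rightarrow> real \<Rightarrow> real \<Rightarrow> bool" where
  "tanh_eqn k b \<beta> \<delta> a \<longleftrightarrow>
     tanh (a * k * tau0 k b \<beta>) = tau0 k b \<beta> * (1 + \<delta>) / ((tau0 k b \<beta>)\<^sup>2 + \<delta>)"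

end

theory Submission
  imports Defs
begin

text \<open>Put \<open>x = \<tau>\<^sub>0 = \<tau>\<^sub>1 / k\<close> and \<open>t = tanh (b k x)\<close>. The defining equation
  \<open>\<lambda>\<^sub>1(\<tau>\<^sub>1) = k\<close> becomes \<open>t ((1 - \<beta>) x - \<beta>) = 1\<close>, and since \<open>tanh\<close> is increasing the
  equation \<open>tanh (a k x) = r\<close>, \<open>r = x (1 + \<delta>) / (x\<^sup>2 + \<delta>)\<close>, has a root \<open>a \<in> (0, b)\<close>
  iff \<open>r < t\<close>. As \<open>\<alpha> = 1 - \<beta> \<rightarrow> 0\<close>, \<open>\<alpha> x t = 1 + (1 - \<alpha>) t\<close> forces \<open>x \<rightarrow> \<infinity>\<close>, \<open>t \<rightarrow> 1\<close>
  and \<open>\<alpha> x \<rightarrow> 2\<close>; then \<open>r \<approx> (1 + \<delta>) / x \<approx> \<alpha> (1 + \<delta>) / 2\<close> is small, the root exists and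
  \<open>a = artanh r / (k x) \<approx> r / (k x) \<approx> \<alpha>\<^sup>2 (1 + \<delta>) / (4 k)\<close>. For all \<open>\<beta>\<close> one has
  \<open>x \<ge> min 2 (coth (2 b k)) > 1\<close>, and \<open>r \<ge> t\<close> reduces to \<open>\<beta> (1 + \<delta>) x \<le> \<delta> (x - 1)\<close>, which holds once \<open>\<beta>\<close> is small.\<close>

lemma tanh_artanh_real:
  fixes r :: real
  assumes "-1 < r" "r < 1"
  shows "tanh (artanh r) = r"
proof -
  define q where "q = (1 + r) / (1 - r)"
  have q: "q > 0" using assms by (simp add: q_def)
  have "artanh r = ln (sqrt q)" using q by (simp add: artanh_def q_def ln_sqrt)
  also have "tanh (ln (sqrt q)) = (q - 1) / (q + 1)" using q by (simp add: tanh_ln_real)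
  also have "\<dots> = r" using assms by (simp add: q_def field_simps)
  finally show ?thesis .
qed

lemma ex_tanh_eq_between_iff:
  fixes b c r :: real
  assumes "c > 0" "r > 0"
  shows "(\<exists>a. 0 < a \<and> a < b \<and> tanh (a * c) = r) \<longleftrightarrow> r < tanh (b * c)"
proof
  assume "\<exists>a. 0 < a \<and> a < b \<and> tanh (a * c) = r"
  then obtain a where "a < b" "tanh (a * c) = r" by blast
  moreover from this assms have "a * c < b * c" by simp
  ultimately show "r < tanh (b * c)" using tanh_real_less_iff by metis
next
  assume r: "r < tanh (b * c)"
  define a where "a = artanh r / c"
  have ta: "tanh (a * c) = r"
    using assms r tanh_real_lt_1[of "b * c"] by (simp add: a_def tanh_artanh_real)
  have "0 < a * c" using ta assms by (metis tanh_real_pos_iff)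
  moreover have "a * c < b * c" using ta r by (metis tanh_real_less_iff)
  ultimately show "\<exists>a. 0 < a \<and> a < b \<and> tanh (a * c) = r"
    using assms ta by (intro exI[of _ a]) (simp add: zero_less_mult_iff)
qed

lemma lambda1_strict_mono:
  fixes \<beta> b :: real
  assumes "0 \<le> \<beta>" "\<beta> < 1" "b > 0"
  shows "strict_mono_on {0<..} (lambda1 \<beta> b)"
proof (rule strict_mono_onI)
  fix s \<tau> :: real
  assume "s \<in> {0<..}" "s < \<tau>"
  hence s: "0 < s" "s < \<tau>" by auto
  define p where "p = tanh (b * s)"
  define q where "q = tanh (b * \<tau>)"
  have pq: "0 < p" "p < q" using assms s by (simp_all add: p_def q_def)
  have "p / (1 + \<beta> * p) < q / (1 + \<beta> * q)"
    using assms pq by (simp add: divide_simps add_pos_nonneg) (simp add: algebra_simps)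
  hence "s * (p / (1 + \<beta> * p)) < \<tau> * (q / (1 + \<beta> * q))"
    using assms s pq by (intro mult_strict_mono) auto
  hence "(1 - \<beta>) * (s * (p / (1 + \<beta> * p))) < (1 - \<beta>) * (\<tau> * (q / (1 + \<beta> * q)))"
    by (rule mult_strict_left_mono) (use assms in simp)
  thus "lambda1 \<beta> b s < lambda1 \<beta> b \<tau>"
    by (simp add: lambda1_def p_def q_def)
qed

lemma continuous_on_lambda1:
  fixes \<beta> b :: real
  assumes "0 \<le> \<beta>" "b > 0"
  shows "continuous_on {0..} (lambda1 \<beta> b)"
proof -
  have "1 + \<beta> * tanh (b * x) \<noteq> 0" if "x \<ge> 0" for x
    using assms that by (smt (verit) mult_nonneg_nonneg tanh_real_nonneg_iff)
  thus ?thesis unfolding lambda1_def [abs_def] by (intro continuous_intros) auto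
qed

lemma lambda1_eq_has_root:
  fixes k b \<beta> :: real
  assumes "k > 0" "b > 0" "0 \<le> \<beta>" "\<beta> < 1"
  shows "\<exists>\<tau>>0. lambda1 \<beta> b \<tau> = k"
proof -
  define c where "c = (1 - \<beta>) * tanh b / 2"
  have c: "c > 0" using assms by (simp add: c_def)
  have linear_lower: "c * \<tau> \<le> lambda1 \<beta> b \<tau>" if "\<tau> \<ge> 1" for \<tau>
  proof -
    define t where "t = tanh (b * \<tau>)"
    have t: "tanh b \<le> t" "0 < t" "t < 1"
      using assms that tanh_real_lt_1 by (simp_all add: t_def)
    have "c * \<tau> \<le> (1 - \<beta>) * \<tau> * t / 2"
      using assms that t by (simp add: c_def mult_left_mono)
    also have "\<dots> \<le> (1 - \<beta>) * \<tau> * t / (1 + \<beta> * t)"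
      using assms that t by (intro divide_left_mono) (auto intro: add_pos_nonneg mult_le_one)
    finally show ?thesis by (simp add: lambda1_def t_def)
  qed
  define T where "T = 1 + k / c"
  have T: "T \<ge> 1" "k \<le> c * T" using c assms by (simp_all add: T_def field_simps)
  have "lambda1 \<beta> b 0 \<le> k" "k \<le> lambda1 \<beta> b T"
    using assms T linear_lower[of T] by (simp_all add: lambda1_def)
  moreover have "continuous_on {0..T} (lambda1 \<beta> b)"
    using continuous_on_lambda1[OF assms(3,2)] by (rule continuous_on_subset) auto
  ultimately obtain \<tau> where "0 \<le> \<tau>" "lambda1 \<beta> b \<tau> = k"
    using IVT'[of "lambda1 \<beta> b" 0 k T] T(1) by auto
  moreover have "\<tau> \<noteq> 0" using calculation assms by (auto simp: lambda1_def)
  ultimately show ?thesis by (intro exI[of _ \<tau>]) auto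
qed

lemma tau1_root:
  fixes k b \<beta> :: real
  assumes "k > 0" "b > 0" "0 \<le> \<beta>" "\<beta> < 1"
  shows "tau1 k b \<beta> > 0" and "lambda1 \<beta> b (tau1 k b \<beta>) = k"
proof -
  obtain \<tau> where \<tau>: "\<tau> > 0" "lambda1 \<beta> b \<tau> = k"
    using lambda1_eq_has_root[OF assms] by blast
  have "inj_on (lambda1 \<beta> b) {0<..}"
    using lambda1_strict_mono[OF assms(3,4,2)] by (rule strict_mono_on_imp_inj_on)
  hence unique: "\<sigma> = \<tau>" if "\<sigma> > 0 \<and> lambda1 \<beta> b \<sigma> = k" for \<sigma>
    using that \<tau> by (auto dest: inj_onD)
  have "tau1 k b \<beta> = \<tau>" unfolding tau1_def using \<tau> unique by (intro the_equality) blast+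
  with \<tau> show "tau1 k b \<beta> > 0" "lambda1 \<beta> b (tau1 k b \<beta>) = k" by simp_all
qed

lemma tau0_pos:
  fixes k b \<beta> :: real
  assumes "k > 0" "b > 0" "0 \<le> \<beta>" "\<beta> < 1"
  shows "tau0 k b \<beta> > 0"
  using tau1_root(1)[OF assms] assms(1) by (simp add: tau0_def)

lemma tau0_equation:
  fixes k b \<beta> :: real
  assumes "k > 0" "b > 0" "0 \<le> \<beta>" "\<beta> < 1"
  shows "tanh (b * k * tau0 k b \<beta>) * ((1 - \<beta>) * tau0 k b \<beta> - \<beta>) = 1"
proof -
  define \<tau> where "\<tau> = tau1 k b \<beta>"
  define t where "t = tanh (b * \<tau>)"
  have "1 + \<beta> * t > 0"
    using tau1_root(1)[OF assms] assms(2,3) by (simp add: t_def \<tau>_def add_pos_nonneg)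
  moreover have "(1 - \<beta>) * \<tau> * t / (1 + \<beta> * t) = k"
    using tau1_root(2)[OF assms] unfolding lambda1_def \<tau>_def t_def .
  ultimately have "(1 - \<beta>) * \<tau> * t = k * (1 + \<beta> * t)" by (simp add: divide_eq_eq)
  moreover have \<tau>: "\<tau> = k * tau0 k b \<beta>" using assms(1) by (simp add: tau0_def \<tau>_def)
  ultimately have "k * (t * ((1 - \<beta>) * tau0 k b \<beta> - \<beta>)) = k * 1" by (simp add: algebra_simps)
  moreover have "t = tanh (b * k * tau0 k b \<beta>)" by (simp add: t_def \<tau> mult.assoc)
  ultimately show ?thesis using assms(1) by simp
qed

lemma tau0_lower_bound:
  fixes k b \<beta> :: real
  assumes "k > 0" "b > 0" "0 \<le> \<beta>" "\<beta> < 1"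
  shows "min 2 (1 / tanh (2 * b * k)) \<le> tau0 k b \<beta>"
proof -
  define x where "x = tau0 k b \<beta>"
  define t where "t = tanh (b * k * x)"
  have x: "x > 0" using tau0_pos[OF assms] by (simp add: x_def)
  have t: "0 < t" using x assms by (simp add: t_def)
  have "t * ((1 - \<beta>) * x - \<beta>) = 1"
    using tau0_equation[OF assms] unfolding t_def x_def .
  hence "(1 - \<beta>) * (x * t) = 1 + \<beta> * t" by (simp add: algebra_simps)
  moreover have "(1 - \<beta>) * (x * t) \<le> x * t" using assms x t by (simp add: mult_left_le_one_le)
  ultimately have xt: "1 \<le> x * t" using assms t by (smt (verit) mult_nonneg_nonneg)
  show ?thesis
  proof (cases "x < 2")
    case True
    hence "t < tanh (2 * b * k)" using assms by (simp add: t_def)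
    hence "1 < x * tanh (2 * b * k)" using xt x by (smt (verit) mult_strict_left_mono)
    hence "1 / tanh (2 * b * k) < x" using assms by (simp add: divide_simps)
    thus ?thesis by (simp add: x_def)
  qed (simp add: x_def)
qed

lemma ex_tanh_eqn_root_iff:
  fixes k b \<beta> \<delta> :: real
  assumes "k > 0" "b > 0" "0 \<le> \<beta>" "\<beta> < 1" "\<delta> > 0"
  shows "(\<exists>a. 0 < a \<and> a < b \<and> tanh_eqn k b \<beta> \<delta> a) \<longleftrightarrow>
    tau0 k b \<beta> * (1 + \<delta>) < tanh (b * k * tau0 k b \<beta>) * ((tau0 k b \<beta>)\<^sup>2 + \<delta>)"
proof -
  define x where "x = tau0 k b \<beta>"
  have x: "x > 0" using tau0_pos[OF assms(1-4)] by (simp add: x_def)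
  have den: "x\<^sup>2 + \<delta> > 0" using assms(5) by (simp add: add_nonneg_pos)
  have "(\<exists>a. 0 < a \<and> a < b \<and> tanh_eqn k b \<beta> \<delta> a) \<longleftrightarrow>
      (\<exists>a. 0 < a \<and> a < b \<and> tanh (a * (k * x)) = x * (1 + \<delta>) / (x\<^sup>2 + \<delta>))"
    by (simp add: tanh_eqn_def x_def mult.assoc)
  also have "\<dots> \<longleftrightarrow> x * (1 + \<delta>) / (x\<^sup>2 + \<delta>) < tanh (b * (k * x))"
    using assms x den by (intro ex_tanh_eq_between_iff) auto
  also have "\<dots> \<longleftrightarrow> x * (1 + \<delta>) < tanh (b * k * x) * (x\<^sup>2 + \<delta>)"
    using den by (simp add: pos_divide_less_eq mult.assoc)
  finally show ?thesis by (simp add: x_def)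
qed

lemma ex_tanh_eqn_root_near_beta_one:
  fixes k b \<alpha> \<delta> :: real
  assumes "k > 0" "b > 0" "0 < \<alpha>" "0 < \<delta>" "\<alpha> * (1 + \<delta>) < 1"
  shows "\<exists>a. 0 < a \<and> a < b \<and> tanh_eqn k b (1 - \<alpha>) \<delta> a"
proof -
  have "\<alpha> \<le> \<alpha> * (1 + \<delta>)" using assms(3,4) by simp
  hence \<beta>: "0 \<le> 1 - \<alpha>" "1 - \<alpha> < 1" using assms(3,5) by linarith+
  define x where "x = tau0 k b (1 - \<alpha>)"
  define t where "t = tanh (b * k * x)"
  have x: "x > 0" using tau0_pos[OF assms(1,2) \<beta>] by (simp add: x_def)
  have t: "0 < t" using x assms by (simp add: t_def)
  have "t * (\<alpha> * x - (1 - \<alpha>)) = 1"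
    using tau0_equation[OF assms(1,2) \<beta>] unfolding t_def x_def by simp
  hence "\<alpha> * (x * t) = 1 + (1 - \<alpha>) * t" by (simp add: algebra_simps)
  hence "1 \<le> \<alpha> * (x * t)" using t \<beta> by simp
  hence "1 / \<alpha> \<le> x * t" using assms by (simp add: divide_simps mult.commute)
  moreover have "1 + \<delta> < 1 / \<alpha>" using assms(3,5) by (simp add: less_divide_eq mult.commute)
  ultimately have "x * (1 + \<delta>) < x * (x * t)" using x by simp
  also have "\<dots> \<le> t * (x\<^sup>2 + \<delta>)" using t assms by (simp add: power2_eq_square algebra_simps)
  finally show ?thesis
    using ex_tanh_eqn_root_iff[OF assms(1,2) \<beta> assms(4)] by (simp add: x_def t_def)
qed

lemma no_tanh_eqn_root:
  fixes k b \<beta> \<delta> :: real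
  assumes "k > 0" "b > 0" "0 \<le> \<beta>" "\<beta> < 1" "\<delta> > 0"
    and small: "\<beta> * (1 + \<delta>) * tau0 k b \<beta> \<le> \<delta> * (tau0 k b \<beta> - 1)"
  shows "\<not> (\<exists>a. 0 < a \<and> a < b \<and> tanh_eqn k b \<beta> \<delta> a)"
proof -
  define x where "x = tau0 k b \<beta>"
  define t where "t = tanh (b * k * x)"
  define d where "d = (1 - \<beta>) * x - \<beta>"
  have x: "x > 0" using tau0_pos[OF assms(1-4)] by (simp add: x_def)
  have t: "0 < t" using x assms by (simp add: t_def)
  have td: "t * d = 1" using tau0_equation[OF assms(1-4)] by (simp add: t_def d_def x_def)
  have "x * (1 + \<delta>) * d - (x\<^sup>2 + \<delta>) = (x + 1) * (\<delta> * (x - 1) - \<beta> * (1 + \<delta>) * x)"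
    by (simp add: d_def power2_eq_square algebra_simps)
  also have "\<dots> \<ge> 0" using x small by (simp add: x_def)
  finally have "t * (x\<^sup>2 + \<delta>) \<le> t * (x * (1 + \<delta>) * d)" using t by simp
  also have "\<dots> = x * (1 + \<delta>) * (t * d)" by (simp only: mult_ac)
  also have "\<dots> = x * (1 + \<delta>)" using td by simp
  finally show ?thesis
    using ex_tanh_eqn_root_iff[OF assms(1-5)] by (simp add: x_def t_def)
qed

lemma eventually_no_tanh_eqn_root:
  fixes k b \<delta> :: real
  assumes "k > 0" "b > 0" "0 < \<delta>"
  shows "\<exists>\<beta>0>0. \<forall>\<beta>. 0 < \<beta> \<and> \<beta> < \<beta>0 \<longrightarrow> \<not> (\<exists>a. 0 < a \<and> a < b \<and> tanh_eqn k b \<beta> \<delta> a)"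
proof -
  define m where "m = min 2 (1 / tanh (2 * b * k))"
  have m: "m > 1" using assms tanh_real_lt_1[of "2 * b * k"] by (simp add: m_def)
  define \<beta>0 where "\<beta>0 = min 1 (\<delta> * (m - 1) / (m * (1 + \<delta>)))"
  have "\<beta>0 > 0" using m assms by (simp add: \<beta>0_def)
  moreover have "\<not> (\<exists>a. 0 < a \<and> a < b \<and> tanh_eqn k b \<beta> \<delta> a)" if \<beta>: "0 < \<beta>" "\<beta> < \<beta>0" for \<beta>
  proof (rule no_tanh_eqn_root[OF assms(1,2) _ _ assms(3)])
    show \<beta>1: "0 \<le> \<beta>" "\<beta> < 1" using \<beta> by (auto simp: \<beta>0_def)
    define x where "x = tau0 k b \<beta>"
    have x: "m \<le> x" using tau0_lower_bound[OF assms(1,2) \<beta>1] by (simp add: x_def m_def)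
    have "0 < m * (1 + \<delta>)" using m assms by simp
    hence "\<beta> * (m * (1 + \<delta>)) < \<delta> * (m - 1)"
      using \<beta> by (simp add: \<beta>0_def pos_less_divide_eq)
    hence "\<beta> * (1 + \<delta>) \<le> \<delta> * (m - 1) / m"
      using m by (simp add: pos_le_divide_eq mult_ac)
    also have "\<dots> \<le> \<delta> * (x - 1) / x"
      using x m assms by (simp add: divide_simps) (simp add: algebra_simps)
    finally show "\<beta> * (1 + \<delta>) * tau0 k b \<beta> \<le> \<delta> * (tau0 k b \<beta> - 1)"
      using x m by (simp add: x_def [symmetric] pos_le_divide_eq)
  qed
  ultimately show ?thesis by blast
qed

lemma tau0_near_beta_one:
  fixes k b \<alpha> :: real
  assumes "k > 0" "b > 0" "0 < \<alpha>" "\<alpha> \<le> 1"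
  shows "\<alpha> * tau0 k b (1 - \<alpha>) = 1 / tanh (b * k * tau0 k b (1 - \<alpha>)) + (1 - \<alpha>)"
proof -
  have \<beta>: "0 \<le> 1 - \<alpha>" "1 - \<alpha> < 1" using assms by auto
  have "tanh (b * k * tau0 k b (1 - \<alpha>)) \<noteq> 0"
    using tau0_pos[OF assms(1,2) \<beta>] assms by simp
  with tau0_equation[OF assms(1,2) \<beta>] show ?thesis by (simp add: field_simps)
qed

lemma filterlim_tau0_at_right_0:
  fixes k b :: real
  assumes "k > 0" "b > 0"
  shows "filterlim (\<lambda>\<alpha>. tau0 k b (1 - \<alpha>)) at_top (at_right 0)"
proof (rule filterlim_at_top_mono[OF filterlim_inverse_at_top_right])
  have "inverse \<alpha> \<le> tau0 k b (1 - \<alpha>)" if "0 < \<alpha>" "\<alpha> < 1" for \<alpha>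
  proof -
    have "1 \<le> 1 / tanh (b * k * tau0 k b (1 - \<alpha>))"
      using tau0_pos[of k b "1 - \<alpha>"] assms that tanh_real_lt_1 by (simp add: divide_simps less_imp_le)
    hence "1 \<le> \<alpha> * tau0 k b (1 - \<alpha>)" using tau0_near_beta_one[OF assms, of \<alpha>] that by simp
    thus ?thesis using that by (simp add: field_simps)
  qed
  thus "\<forall>\<^sub>F \<alpha> in at_right 0. inverse \<alpha> \<le> tau0 k b (1 - \<alpha>)"
    unfolding eventually_at_right_field by (intro exI[of _ 1]) auto
qed

lemma tendsto_mult_tau0_at_right_0:
  fixes k b :: real
  assumes "k > 0" "b > 0"
  shows "((\<lambda>\<alpha>. \<alpha> * tau0 k b (1 - \<alpha>)) \<longlongrightarrow> 2) (at_right 0)"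
proof -
  have "filterlim (\<lambda>\<alpha>. (b * k) * tau0 k b (1 - \<alpha>)) at_top (at_right 0)"
    using assms by (intro filterlim_tendsto_pos_mult_at_top[OF tendsto_const _
          filterlim_tau0_at_right_0]) auto
  hence "((\<lambda>\<alpha>. tanh (b * k * tau0 k b (1 - \<alpha>))) \<longlongrightarrow> 1) (at_right 0)"
    using filterlim_compose[OF tanh_real_at_top] by blast
  hence "((\<lambda>\<alpha>. 1 / tanh (b * k * tau0 k b (1 - \<alpha>)) + (1 - \<alpha>)) \<longlongrightarrow> 1 / 1 + (1 - 0)) (at_right 0)"
    by (intro tendsto_intros) auto
  moreover have "\<forall>\<^sub>F \<alpha> in at_right 0.
      1 / tanh (b * k * tau0 k b (1 - \<alpha>)) + (1 - \<alpha>) = \<alpha> * tau0 k b (1 - \<alpha>)"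
    unfolding eventually_at_right_field
    using tau0_near_beta_one[OF assms] by (intro exI[of _ 1]) auto
  ultimately show ?thesis by (simp add: Lim_transform_eventually)
qed

lemma tendsto_artanh_over_id_at_0: "((\<lambda>y. artanh y / y) \<longlongrightarrow> 1) (at (0 :: real))"
proof -
  have "(artanh has_field_derivative (1 / (1 - 0 ^ 2))) (at (0 :: real))"
    by (rule artanh_real_has_field_derivative) simp
  thus ?thesis by (simp add: has_field_derivative_iff)
qed

lemma tendsto_tanh_eqn_rhs:
  fixes x :: "'a \<Rightarrow> real" and \<delta> :: real
  defines "r \<equiv> \<lambda>t. x t * (1 + \<delta>) / ((x t)\<^sup>2 + \<delta>)"
  assumes x_top: "filterlim x at_top F" and "\<delta> > 0"
  shows "((\<lambda>t. r t * x t) \<longlongrightarrow> 1 + \<delta>) F" and "filterlim r (at 0) F"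
proof -
  have den: "(x t)\<^sup>2 + \<delta> \<noteq> 0" for t
    using add_nonneg_pos[OF zero_le_power2 assms(3), of "x t"] by simp
  have x_pos: "\<forall>\<^sub>F t in F. x t > 0"
    using x_top unfolding filterlim_at_top_dense by blast
  have "((\<lambda>t. (1 + \<delta>) / (1 + \<delta> * (inverse (x t))\<^sup>2)) \<longlongrightarrow> (1 + \<delta>) / (1 + \<delta> * 0\<^sup>2)) F"
    by (intro tendsto_intros tendsto_inverse_0_at_top[OF x_top]) auto
  moreover have "\<forall>\<^sub>F t in F. (1 + \<delta>) / (1 + \<delta> * (inverse (x t))\<^sup>2) = r t * x t"
    using x_pos by eventually_elim (use assms(3) in \<open>simp add: r_def field_simps power2_eq_square\<close>)
  ultimately show rx: "((\<lambda>t. r t * x t) \<longlongrightarrow> 1 + \<delta>) F" by (simp add: Lim_transform_eventually)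
  have "((\<lambda>t. r t * x t * inverse (x t)) \<longlongrightarrow> (1 + \<delta>) * 0) F"
    by (intro tendsto_intros rx tendsto_inverse_0_at_top[OF x_top])
  moreover have "\<forall>\<^sub>F t in F. r t * x t * inverse (x t) = r t"
    using x_pos by eventually_elim simp
  ultimately have "(r \<longlongrightarrow> 0) F" by (simp add: Lim_transform_eventually)
  moreover have "\<forall>\<^sub>F t in F. r t \<noteq> 0"
    using x_pos by eventually_elim (use assms(3) den in \<open>simp add: r_def\<close>)
  ultimately show "filterlim r (at 0) F" by (rule filterlim_atI)
qed

lemma tanh_eqn_root_asymp_equiv:
  fixes k b \<delta> :: real and A :: "real \<Rightarrow> real"
  assumes "k > 0" "b > 0" "0 < \<delta>"
    and root: "\<forall>\<^sub>F \<alpha> in at_right 0. tanh_eqn k b (1 - \<alpha>) \<delta> (A \<alpha>)"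
  shows "A \<sim>[at_right 0] (\<lambda>\<alpha>. \<alpha>\<^sup>2 * (1 + \<delta>) / (4 * k))"
proof -
  define F where "F = at_right (0 :: real)"
  define x where "x \<alpha> = tau0 k b (1 - \<alpha>)" for \<alpha>
  define r where "r \<alpha> = x \<alpha> * (1 + \<delta>) / ((x \<alpha>)\<^sup>2 + \<delta>)" for \<alpha>
  have x_top: "filterlim x at_top F"
    using filterlim_tau0_at_right_0[OF assms(1,2)] unfolding x_def [abs_def] F_def .
  have x_pos: "\<forall>\<^sub>F \<alpha> in F. x \<alpha> > 0"
    using x_top unfolding filterlim_at_top_dense by blast
  have r_lim: "((\<lambda>\<alpha>. r \<alpha> * x \<alpha>) \<longlongrightarrow> 1 + \<delta>) F" "filterlim r (at 0) F"
    using tendsto_tanh_eqn_rhs[OF x_top assms(3)] unfolding r_def [abs_def] by simp_all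
  have r_ne: "\<forall>\<^sub>F \<alpha> in F. r \<alpha> \<noteq> 0" using r_lim(2) by (simp add: filterlim_at)
  have artanh_r: "((\<lambda>\<alpha>. artanh (r \<alpha>) / r \<alpha>) \<longlongrightarrow> 1) F"
    using filterlim_compose[OF tendsto_artanh_over_id_at_0 r_lim(2)] .
  have "((\<lambda>\<alpha>. \<alpha> * x \<alpha>) \<longlongrightarrow> 2) F"
    using tendsto_mult_tau0_at_right_0[OF assms(1,2)] unfolding x_def F_def .
  hence "((\<lambda>\<alpha>. artanh (r \<alpha>) / r \<alpha> * (r \<alpha> * x \<alpha> / (1 + \<delta>)) * (4 / (\<alpha> * x \<alpha>)\<^sup>2))
      \<longlongrightarrow> 1 * ((1 + \<delta>) / (1 + \<delta>)) * (4 / 2\<^sup>2)) F"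
    using assms(3) by (intro tendsto_intros artanh_r r_lim(1)) auto
  also have "1 * ((1 + \<delta>) / (1 + \<delta>)) * (4 / 2\<^sup>2) = (1 :: real)" using assms(3) by simp
  finally have lim: "((\<lambda>\<alpha>. artanh (r \<alpha>) / r \<alpha> * (r \<alpha> * x \<alpha> / (1 + \<delta>)) * (4 / (\<alpha> * x \<alpha>)\<^sup>2))
      \<longlongrightarrow> 1) F" .
  have "\<forall>\<^sub>F \<alpha> in F. artanh (r \<alpha>) / r \<alpha> * (r \<alpha> * x \<alpha> / (1 + \<delta>)) * (4 / (\<alpha> * x \<alpha>)\<^sup>2)
      = A \<alpha> / (\<alpha>\<^sup>2 * (1 + \<delta>) / (4 * k))"
    using x_pos r_ne root eventually_at_right_less[of 0] unfolding F_def
  proof eventually_elim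
    case (elim \<alpha>)
    have "tanh (A \<alpha> * (k * x \<alpha>)) = r \<alpha>"
      using elim by (simp add: tanh_eqn_def x_def r_def mult.assoc)
    hence A_eq: "A \<alpha> = artanh (r \<alpha>) / (k * x \<alpha>)"
      using elim assms(1) by (metis artanh_tanh_real nonzero_mult_div_cancel_right
          mult_pos_pos less_irrefl)
    have "x \<alpha> \<noteq> 0" "\<alpha> \<noteq> 0" "1 + \<delta> \<noteq> 0" "k \<noteq> 0" using elim assms by auto
    with \<open>r \<alpha> \<noteq> 0\<close> show ?case unfolding A_eq by (simp add: divide_simps power2_eq_square)
  qed
  with lim show ?thesis
    unfolding F_def by (intro asymp_equivI') (rule Lim_transform_eventually)
qed

lemma g'_eq: "g' \<tau> lam y = \<tau>\<^sup>2 * sinh (\<tau> * y) + lam * \<tau> * cosh (\<tau> * y)"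
proof -
  have "(g \<tau> lam has_field_derivative \<tau>\<^sup>2 * sinh (\<tau> * y) + lam * \<tau> * cosh (\<tau> * y)) (at y)"
    unfolding g_def [abs_def]
    by (auto intro!: derivative_eq_intros simp: power2_eq_square algebra_simps)
  thus ?thesis unfolding g'_def by (rule DERIV_imp_deriv)
qed

lemma Rfun_eq_0_iff:
  fixes k b \<beta> S \<mu> a :: real
  assumes "k > 0" "b > 0" "0 \<le> \<beta>" "\<beta> < 1" "S > 0" "\<mu> > 0"
  shows "Rfun k b \<beta> S \<mu> a = 0 \<longleftrightarrow> tanh_eqn k b \<beta> (S / (2 * pi * \<mu>)) a"
proof -
  define \<tau> where "\<tau> = tau1 k b \<beta>"
  define M where "M = 2 * pi * \<mu>"
  define c where "c = cosh (\<tau> * a)"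
  define s where "s = sinh (\<tau> * a)"
  define D where "D = k\<^sup>2 * S + M * \<tau>\<^sup>2"
  have \<tau>: "\<tau> > 0" using tau1_root(1)[OF assms(1-4)] by (simp add: \<tau>_def)
  have M: "M > 0" using assms by (simp add: M_def)
  have c: "c > 0" by (simp add: c_def)
  have D: "D > 0" using assms M \<tau> unfolding D_def by (intro add_pos_pos) simp_all
  have lhs: "tanh (a * k * (\<tau> / k)) = s / c"
    using assms(1) by (simp add: tanh_def s_def c_def mult.commute)
  have rhs: "\<tau> / k * (1 + S / M) / ((\<tau> / k)\<^sup>2 + S / M) = k * \<tau> * (M + S) / D"
    using assms M D unfolding D_def by (simp add: divide_simps power2_eq_square) (simp add: algebra_simps)
  have "tanh_eqn k b \<beta> (S / (2 * pi * \<mu>)) a \<longleftrightarrow> s / c = k * \<tau> * (M + S) / D"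
    unfolding tanh_eqn_def tau0_def \<tau>_def [symmetric] M_def [symmetric] lhs rhs ..
  also have "\<dots> \<longleftrightarrow> k * \<tau> * c * (M + S) - s * D = 0"
    using c D by (simp add: frac_eq_eq algebra_simps) (simp add: eq_commute)
  also have "k * \<tau> * c * (M + S) - s * D = Rfun k b \<beta> S \<mu> a"
    unfolding Rfun_def g'_eq g_def c_def s_def M_def D_def \<tau>_def
    by (simp add: algebra_simps power2_eq_square)
  finally show ?thesis ..
qed

theorem mainTheorem4:
  fixes k b :: real
  assumes "k > 0" and "b > 0"
  shows
    "(\<forall>\<beta> S \<mu> a. 0 < \<beta> \<and> \<beta> < 1 \<and> S > 0 \<and> \<mu> > 0 \<and> S < 2 * pi * \<mu> \<and> 0 < a \<and> a < b \<longrightarrow>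
        (Rfun k b \<beta> S \<mu> a = 0 \<longleftrightarrow> tanh_eqn k b \<beta> (S / (2 * pi * \<mu>)) a))
     \<and> (\<forall>\<delta>. 0 < \<delta> \<and> \<delta> < 1 \<longrightarrow>
          (\<exists>\<alpha>0 > 0. \<forall>\<alpha>. 0 < \<alpha> \<and> \<alpha> < \<alpha>0 \<longrightarrow>
              (\<exists>a. 0 < a \<and> a < b \<and> tanh_eqn k b (1 - \<alpha>) \<delta> a))
        \<and> (\<forall>A :: real \<Rightarrow> real.
              (\<forall>\<^sub>F \<alpha> in at_right 0. 0 < A \<alpha> \<and> A \<alpha> < b \<and> tanh_eqn k b (1 - \<alpha>) \<delta> (A \<alpha>))
              \<longrightarrow> A \<sim>[at_right 0] (\<lambda>\<alpha>. \<alpha>\<^sup>2 * (1 + \<delta>) / (4 * k))))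
     \<and> (\<forall>\<delta>. 0 < \<delta> \<and> \<delta> < 1 \<longrightarrow>
          (\<exists>\<beta>0 > 0. \<forall>\<beta>. 0 < \<beta> \<and> \<beta> < \<beta>0 \<longrightarrow>
              \<not> (\<exists>a. 0 < a \<and> a < b \<and> tanh_eqn k b \<beta> \<delta> a)))"
proof (intro conjI allI impI)
  fix \<beta> S \<mu> a :: real
  assume "0 < \<beta> \<and> \<beta> < 1 \<and> S > 0 \<and> \<mu> > 0 \<and> S < 2 * pi * \<mu> \<and> 0 < a \<and> a < b"
  with assms show "Rfun k b \<beta> S \<mu> a = 0 \<longleftrightarrow> tanh_eqn k b \<beta> (S / (2 * pi * \<mu>)) a"
    by (intro Rfun_eq_0_iff) auto
next
  fix \<delta> :: real
  assume "0 < \<delta> \<and> \<delta> < 1"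
  with assms show "\<exists>\<alpha>0 > 0. \<forall>\<alpha>. 0 < \<alpha> \<and> \<alpha> < \<alpha>0 \<longrightarrow> (\<exists>a. 0 < a \<and> a < b \<and> tanh_eqn k b (1 - \<alpha>) \<delta> a)"
    by (intro exI[of _ "1 / (1 + \<delta>)"])
      (auto intro: ex_tanh_eqn_root_near_beta_one simp: less_divide_eq)
next
  fix \<delta> :: real and A :: "real \<Rightarrow> real"
  assume "0 < \<delta> \<and> \<delta> < 1"
    and "\<forall>\<^sub>F \<alpha> in at_right 0. 0 < A \<alpha> \<and> A \<alpha> < b \<and> tanh_eqn k b (1 - \<alpha>) \<delta> (A \<alpha>)"
  with assms show "A \<sim>[at_right 0] (\<lambda>\<alpha>. \<alpha>\<^sup>2 * (1 + \<delta>) / (4 * k))"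
    by (intro tanh_eqn_root_asymp_equiv[of k b]) (auto elim: eventually_mono)
next
  fix \<delta> :: real
  assume "0 < \<delta> \<and> \<delta> < 1"
  with assms show "\<exists>\<beta>0 > 0. \<forall>\<beta>. 0 < \<beta> \<and> \<beta> < \<beta>0 \<longrightarrow> \<not> (\<exists>a. 0 < a \<and> a < b \<and> tanh_eqn k b \<beta> \<delta> a)"
    by (intro eventually_no_tanh_eqn_root) auto
qed

end
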